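(* Let $s_1,\dots,s_n>0$, $S=\sum_{j=1}^n s_j$, $s_0>0$, and $I_1=\{j\in[n]: s_j>s_0\}$. Let $k\ge1$ and draw indices $\pi(1),\dots,\pi(k)\in[n]$ i.i.d., each equal to $j$ with probability $p_j=s_j/S$; assign to the $i$-th draw the weight $w_i=\frac{1}{k\,p_{\pi(i)}}$. Then with probability at least $1-\frac1k$, $$\sum_{i\in[k]:\,\pi(i)\in I_1}w_i\le\frac{2S}{s_0}.$$ *)

theory Defs
  imports "HOL-Probability.Probability"
begin

definition sample_pmf :: "(nat \<Rightarrow> real) \<Rightarrow> nat \<Rightarrow> nat pmf" where
  "sample_pmf s n = embed_pmf (\<lambda>j. if j \<in> {1..n} then s j / (\<Sum>i=1..n. s i) else 0)"

definition draws_pmf :: "(nat \<Rightarrow> real) \<Rightarrow> nat \<Rightarrow> nat \<Rightarrow> (nat \<Rightarrow> nat) pmf" where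
  "draws_pmf s n k = Pi_pmf {1..k} 0 (\<lambda>_. sample_pmf s n)"

end

theory Submission
  imports Defs
begin

text \<open>The bound holds surely, not only with probability \<open>1 - 1/k\<close>: a draw of a heavy index
  \<open>j\<close> (one with \<open>s\<^sub>j > s\<^sub>0\<close>) has weight \<open>S / (k s\<^sub>j) < S / (k s\<^sub>0)\<close>, and there are at most
  \<open>k\<close> draws, so the heavy weights sum to at most \<open>S / s\<^sub>0\<close>.\<close>

lemma importance_weight_le:
  fixes k S s0 x :: real
  assumes "0 < k" "0 < S" "0 < s0" "s0 < x"
  shows "1 / (k * (x / S)) \<le> S / (k * s0)"
proof -
  have "1 / (k * (x / S)) = S / (k * x)"
    using assms by (simp add: field_simps)
  also have "\<dots> \<le> S / (k * s0)"
    using assms by (intro divide_left_mono mult_left_mono mult_nonneg_nonneg) auto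
  finally show ?thesis .
qed

lemma heavy_weight_sum_le:
  fixes s :: "nat \<Rightarrow> real" and \<pi> :: "nat \<Rightarrow> nat"
  assumes "0 < S" "0 < s0" "k \<ge> 1" "\<And>j. j \<in> I \<Longrightarrow> s0 < s j"
  shows "(\<Sum>i\<in>{i \<in> {1..k}. \<pi> i \<in> I}. 1 / (real k * (s (\<pi> i) / S))) \<le> S / s0"
proof -
  let ?A = "{i \<in> {1..k}. \<pi> i \<in> I}"
  have "(\<Sum>i\<in>?A. 1 / (real k * (s (\<pi> i) / S))) \<le> real (card ?A) * (S / (real k * s0))"
    using assms by (intro sum_bounded_above importance_weight_le) auto
  also have "\<dots> \<le> real k * (S / (real k * s0))"
  proof (rule mult_right_mono)
    have "card ?A \<le> card {1..k}" by (rule card_mono) auto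
    then show "real (card ?A) \<le> real k" by simp
  qed (use assms in simp)
  also have "\<dots> = S / s0"
    using assms by simp
  finally show ?thesis .
qed

theorem lemma14:
  fixes s :: "nat \<Rightarrow> real" and n k :: nat and s0 :: real
  assumes "\<And>j. j \<in> {1..n} \<Longrightarrow> s j > 0"
    and "s0 > 0"
    and "n \<ge> 1" and "k \<ge> 1"
  defines "S \<equiv> (\<Sum>j=1..n. s j)"
    and "I1 \<equiv> {j \<in> {1..n}. s j > s0}"
  shows "measure_pmf.prob (draws_pmf s n k)
           {\<pi>. (\<Sum>i\<in>{i \<in> {1..k}. \<pi> i \<in> I1}. 1 / (real k * (s (\<pi> i) / S))) \<le> 2 * S / s0}
         \<ge> 1 - 1 / real k"
proof -
  have "S > 0"
    unfolding S_def using assms(1,3) by (intro sum_pos) auto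
  then have "S / s0 \<le> 2 * S / s0"
    using assms(2) by (simp add: divide_right_mono)
  moreover have "(\<Sum>i\<in>{i \<in> {1..k}. \<pi> i \<in> I1}. 1 / (real k * (s (\<pi> i) / S))) \<le> S / s0"
    for \<pi>
    using \<open>S > 0\<close> assms(2,4) unfolding I1_def by (intro heavy_weight_sum_le) auto
  ultimately have "(\<Sum>i\<in>{i \<in> {1..k}. \<pi> i \<in> I1}. 1 / (real k * (s (\<pi> i) / S))) \<le> 2 * S / s0"
    for \<pi>
    by (rule order_trans[rotated])
  then show ?thesis
    by simp
qed

end
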